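(* For every $(g,n)\in Q\rtimes\mathbb{Z}$ we have $\det\bigl((g,n);\tau_q\bigr)=q^{-n}$.
   Context: All representations are over $\overline{\mathbb{Q}}_\ell$, $\ell$ an odd prime. Let $q=2^f$ with $f\ge1$. Let $Q\subset \mathit{GL}_3(\mathbb{F}_4)$ be the group of matrices $g(\alpha,\beta,\gamma)=\begin{pmatrix}\alpha&\beta&\gamma\\0&\alpha^2&\beta^2\\0&0&\alpha\end{pmatrix}$ with $\alpha\in\mathbb{F}_4^\times$, $\beta,\gamma\in\mathbb{F}_4$, $\alpha\gamma^2+\alpha^2\gamma=\beta^3$. Let $Q\rtimes\mathbb{Z}$ be the semidirect product where $r\in\mathbb{Z}$ acts by $g(\alpha,\beta,\gamma)\mapsto g(\alpha^{q^r},\beta^{q^r},\gamma^{q^r})$. Fix $\bar\zeta_3\in\mathbb{F}_4\setminus\mathbb{F}_2$. Let $Q_8=\{g(1,\beta,\gamma)\in Q\}$; $C_4\subset Q_8$ the cyclic subgroup of order 4 generated by $g(1,1,\bar\zeta_3)$; $Z=\{g(1,0,0),g(1,0,1)\}$; $C_3=\{g(\alpha,0,0)\}$; $C_6=Z\times C_3$. Fix a faithful character $\phi$ of $C_4$; let $\tau$ be the unique irreducible two-dimensional representation of $Q$ with $\tau|_Z\simeq(\phi|_Z)^{\oplus2}$ and $\operatorname{Tr}\tau(g(\alpha,0,0))=-1$ for $\alpha\in\mathbb{F}_4\setminus\mathbb{F}_2$. Fix $(-2)^{1/2}\in\overline{\mathbb{Q}}_\ell$, with $(-2)^{m/2}=((-2)^{1/2})^m$.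 The representation $\tau_q$ of $Q\rtimes\mathbb{Z}$ is defined as follows. If $f$ is even, $Q\rtimes\mathbb{Z}=Q\times\mathbb{Z}$ and $\tau_q$ is the representation with $\tau_q|_Q\simeq\tau$ and $(g(1,0,0),1)$ acting by the scalar $(-2)^{-f/2}$. If $f$ is odd: let $C\subset Q_8\rtimes\mathbb{Z}$ be the subgroup of $(g,n)$ with $g\in C_4$ if $n$ even and $g\in Q_8\setminus C_4$ if $n$ odd; fix $\eta$ with $\eta^2+(-2)^{(f+1)/2}\eta+q=0$; let $\phi_1$ be the character of $C$ with $\phi_1((g(1,\bar\zeta_3,\bar\zeta_3),1))=\eta q^{-1}$, $\phi_1((g(1,0,0),2))=-q^{-1}$; let $\phi_2$ be the character of $C_6\rtimes\mathbb{Z}$ with $\phi_2|_{C_6}=\phi|_Z\otimes1_{C_3}$ and $\phi_2((g(1,0,0),1))=(-2)^{f/2}q^{-1}$; there is a surjective $Q\rtimes\mathbb{Z}$-homomorphism $\Psi\colon\operatorname{Ind}_C^{Q\rtimes\mathbb{Z}}\phi_1\to\operatorname{Ind}_{C_6\rtimes\mathbb{Z}}^{Q\rtimes\mathbb{Z}}\phi_2$, unique up to scalar, and $\tau_q:=\ker\Psi$ (two-dimensional). *)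

theory Defs
  imports "HOL-Analysis.Analysis" "HOL-Computational_Algebra.Polynomial"
begin

text \<open>F4 = {0, 1, z, z2} where z is the fixed element zeta3-bar of F4 outside F2, and z2 = z^2 = z + 1.\<close>
datatype F4 = F0 | F1 | Fz | Fz2

fun f4_add :: "F4 \<Rightarrow> F4 \<Rightarrow> F4" where
  "f4_add F0 x = x"
| "f4_add x F0 = x"
| "f4_add F1 F1 = F0"
| "f4_add F1 Fz = Fz2"
| "f4_add F1 Fz2 = Fz"
| "f4_add Fz F1 = Fz2"
| "f4_add Fz Fz = F0"
| "f4_add Fz Fz2 = F1"
| "f4_add Fz2 F1 = Fz"
| "f4_add Fz2 Fz = F1"
| "f4_add Fz2 Fz2 = F0"

fun f4_mul :: "F4 \<Rightarrow> F4 \<Rightarrow> F4" where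
  "f4_mul F0 x = F0"
| "f4_mul x F0 = F0"
| "f4_mul F1 x = x"
| "f4_mul x F1 = x"
| "f4_mul Fz Fz = Fz2"
| "f4_mul Fz Fz2 = F1"
| "f4_mul Fz2 Fz = F1"
| "f4_mul Fz2 Fz2 = Fz"

definition f4_sq :: "F4 \<Rightarrow> F4" where "f4_sq x = f4_mul x x"
definition f4_cube :: "F4 \<Rightarrow> F4" where "f4_cube x = f4_mul x (f4_sq x)"

text \<open>The action of r in Z on F4: x \<mapsto> x^(q^r) with q = 2^f. Since the Frobenius x \<mapsto> x^2
  is an involution of F4, this is the identity if f*r is even and the Frobenius otherwise
  (for negative r, x^(q^r) means the r-th power of the automorphism x \<mapsto> x^q).\<close>
definition f4_act :: "nat \<Rightarrow> int \<Rightarrow> F4 \<Rightarrow> F4" where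
  "f4_act f r x = (if even (int f * r) then x else f4_sq x)"

type_synonym mat3 = "nat \<Rightarrow> nat \<Rightarrow> F4"

definition mmul :: "mat3 \<Rightarrow> mat3 \<Rightarrow> mat3" where
  "mmul A B = (\<lambda>i j. if i < 3 \<and> j < 3 then
      f4_add (f4_mul (A i 0) (B 0 j)) (f4_add (f4_mul (A i 1) (B 1 j)) (f4_mul (A i 2) (B 2 j)))
    else F0)"

definition gm :: "F4 \<Rightarrow> F4 \<Rightarrow> F4 \<Rightarrow> mat3" where
  "gm a b c = (\<lambda>i j.
     if i = 0 \<and> j = 0 then a else if i = 0 \<and> j = 1 then b else if i = 0 \<and> j = 2 then c
     else if i = 1 \<and> j = 1 then f4_sq a else if i = 1 \<and> j = 2 then f4_sq b
     else if i = 2 \<and> j = 2 then a else F0)"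

definition Qgrp :: "mat3 set" where
  "Qgrp = {gm a b c | a b c. a \<noteq> F0 \<and>
            f4_add (f4_mul a (f4_sq c)) (f4_mul (f4_sq a) c) = f4_cube b}"

definition one3 :: mat3 where "one3 = gm F1 F0 F0"

fun mpow :: "mat3 \<Rightarrow> nat \<Rightarrow> mat3" where
  "mpow A 0 = one3"
| "mpow A (Suc n) = mmul A (mpow A n)"

definition Q8 :: "mat3 set" where "Q8 = {M \<in> Qgrp. \<exists>b c. M = gm F1 b c}"
definition C4 :: "mat3 set" where "C4 = {mpow (gm F1 F1 Fz) k | k. k < 4}"
definition Zc :: "mat3 set" where "Zc = {gm F1 F0 F0, gm F1 F0 F1}"
definition C3 :: "mat3 set" where "C3 = {gm a F0 F0 | a. a \<noteq> F0}"
definition C6 :: "mat3 set" where "C6 = {mmul z c | z c. z \<in> Zc \<and> c \<in> C3}"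

definition mact :: "nat \<Rightarrow> int \<Rightarrow> mat3 \<Rightarrow> mat3" where
  "mact f r M = (\<lambda>i j. f4_act f r (M i j))"

definition Gset :: "nat \<Rightarrow> (mat3 \<times> int) set" where
  "Gset f = {(M, n). M \<in> Qgrp}"

definition gmul :: "nat \<Rightarrow> mat3 \<times> int \<Rightarrow> mat3 \<times> int \<Rightarrow> mat3 \<times> int" where
  "gmul f x y = (mmul (fst x) (mact f (snd x) (fst y)), snd x + snd y)"

definition is_character :: "(('a \<Rightarrow> 'a \<Rightarrow> 'a)) \<Rightarrow> 'a set \<Rightarrow> ('a \<Rightarrow> 'k::field) \<Rightarrow> bool" where
  "is_character mul H chr \<longleftrightarrow> (\<forall>x\<in>H. chr x \<noteq> 0) \<and> (\<forall>x\<in>H. \<forall>y\<in>H. chr (mul x y) = chr x * chr y)"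

definition faithful_char_C4 :: "(mat3 \<Rightarrow> 'k::field) \<Rightarrow> bool" where
  "faithful_char_C4 \<phi> \<longleftrightarrow> is_character mmul C4 \<phi> \<and> inj_on \<phi> C4"

definition is_rep2 :: "('a \<Rightarrow> 'a \<Rightarrow> 'a) \<Rightarrow> 'a set \<Rightarrow> ('a \<Rightarrow> 'k::field^2^2) \<Rightarrow> bool" where
  "is_rep2 mul H \<rho> \<longleftrightarrow> (\<forall>x\<in>H. invertible (\<rho> x)) \<and> (\<forall>x\<in>H. \<forall>y\<in>H. \<rho> (mul x y) = \<rho> x ** \<rho> y)"

definition invariant_subspace :: "'a set \<Rightarrow> ('a \<Rightarrow> 'k::field^'n^'n) \<Rightarrow> ('k^'n) set \<Rightarrow> bool" where
  "invariant_subspace H \<rho> W \<longleftrightarrow> 0 \<in> W \<and> (\<forall>v\<in>W. \<forall>w\<in>W. v + w \<in> W) \<and> (\<forall>c. \<forall>v\<in>W. c *s v \<in> W)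
      \<and> (\<forall>h\<in>H. \<forall>v\<in>W. \<rho> h *v v \<in> W)"

definition irreducible_rep :: "'a set \<Rightarrow> ('a \<Rightarrow> 'k::field^'n^'n) \<Rightarrow> bool" where
  "irreducible_rep H \<rho> \<longleftrightarrow> \<not> (\<exists>W. invariant_subspace H \<rho> W \<and> W \<noteq> {0} \<and> W \<noteq> UNIV)"

section \<open>The case f even: tau_q with tau_q|_Q = tau\<close>

definition tau_q_even :: "nat \<Rightarrow> 'k::field \<Rightarrow> (mat3 \<Rightarrow> 'k) \<Rightarrow> (mat3 \<times> int \<Rightarrow> 'k^2^2) \<Rightarrow> bool" where
  "tau_q_even f s \<phi> \<rho> \<longleftrightarrow>
     is_rep2 (gmul f) (Gset f) \<rho>
   \<and> irreducible_rep {(M, 0) | M. M \<in> Qgrp} \<rho>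
   \<and> (\<forall>z\<in>Zc. \<rho> (z, 0) = mat (\<phi> z))
   \<and> (\<forall>a\<in>{Fz, Fz2}. trace (\<rho> (gm a F0 F0, 0)) = -1)
   \<and> \<rho> (gm F1 F0 F0, 1) = mat (inverse (s ^ f))"

section \<open>The case f odd: tau_q = ker Psi\<close>

definition Cgrp :: "nat \<Rightarrow> (mat3 \<times> int) set" where
  "Cgrp f = {(M, n). M \<in> Q8 \<and> (even n \<longrightarrow> M \<in> C4) \<and> (odd n \<longrightarrow> M \<notin> C4)}"

definition C6Z :: "(mat3 \<times> int) set" where
  "C6Z = {(M, n). M \<in> C6}"

text \<open>Induced representation Ind_H^G chi, realised as functions F on G (zero off G) with
  F(h x) = chi(h) F(x); G acts by right translation.\<close>
definition Ind :: "nat \<Rightarrow> (mat3 \<times> int) set \<Rightarrow> (mat3 \<times> int \<Rightarrow> 'k::field) \<Rightarrow> (mat3 \<times> int \<Rightarrow> 'k) set" where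
  "Ind f H chr = {F. (\<forall>x. x \<notin> Gset f \<longrightarrow> F x = 0) \<and>
                    (\<forall>h\<in>H. \<forall>x\<in>Gset f. F (gmul f h x) = chr h * F x)}"

definition transl :: "nat \<Rightarrow> mat3 \<times> int \<Rightarrow> (mat3 \<times> int \<Rightarrow> 'k::field) \<Rightarrow> (mat3 \<times> int \<Rightarrow> 'k)" where
  "transl f x F = (\<lambda>y. if y \<in> Gset f then F (gmul f y x) else 0)"

definition G_hom :: "nat \<Rightarrow> (mat3 \<times> int \<Rightarrow> 'k::field) set \<Rightarrow> (mat3 \<times> int \<Rightarrow> 'k) set
     \<Rightarrow> ((mat3 \<times> int \<Rightarrow> 'k) \<Rightarrow> (mat3 \<times> int \<Rightarrow> 'k)) \<Rightarrow> bool" where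
  "G_hom f V W \<Psi> \<longleftrightarrow> (\<forall>F\<in>V. \<Psi> F \<in> W)
     \<and> (\<forall>F\<in>V. \<forall>F'\<in>V. \<Psi> (\<lambda>y. F y + F' y) = (\<lambda>y. \<Psi> F y + \<Psi> F' y))
     \<and> (\<forall>c. \<forall>F\<in>V. \<Psi> (\<lambda>y. c * F y) = (\<lambda>y. c * \<Psi> F y))
     \<and> (\<forall>x\<in>Gset f. \<forall>F\<in>V. \<Psi> (transl f x F) = transl f x (\<Psi> F))"

text \<open>rho is the matrix of the action of Q \<rtimes> Z on ker Psi with respect to a basis (B1, B2) of ker Psi.\<close>
definition tau_q_odd :: "nat \<Rightarrow> 'k::field \<Rightarrow> (mat3 \<Rightarrow> 'k) \<Rightarrow> 'k \<Rightarrow> (mat3 \<times> int \<Rightarrow> 'k) \<Rightarrow> (mat3 \<times> int \<Rightarrow> 'k)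
     \<Rightarrow> ((mat3 \<times> int \<Rightarrow> 'k) \<Rightarrow> (mat3 \<times> int \<Rightarrow> 'k)) \<Rightarrow> (mat3 \<times> int \<Rightarrow> 'k) \<Rightarrow> (mat3 \<times> int \<Rightarrow> 'k)
     \<Rightarrow> (mat3 \<times> int \<Rightarrow> 'k^2^2) \<Rightarrow> bool" where
  "tau_q_odd f s \<phi> \<eta> \<phi>1 \<phi>2 \<Psi> B1 B2 \<rho> \<longleftrightarrow>
     (let q = (of_nat (2 ^ f) :: 'k); K = {F \<in> Ind f (Cgrp f) \<phi>1. (\<forall>y. \<Psi> F y = 0)} in
       \<eta>^2 + s ^ (f + 1) * \<eta> + q = 0
     \<and> is_character (gmul f) (Cgrp f) \<phi>1
     \<and> \<phi>1 (gm F1 Fz Fz, 1) = \<eta> / q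
     \<and> \<phi>1 (gm F1 F0 F0, 2) = - 1 / q
     \<and> is_character (gmul f) C6Z \<phi>2
     \<and> (\<forall>z\<in>Zc. \<forall>c\<in>C3. \<phi>2 (mmul z c, 0) = \<phi> z)
     \<and> \<phi>2 (gm F1 F0 F0, 1) = s ^ f / q
     \<and> G_hom f (Ind f (Cgrp f) \<phi>1) (Ind f C6Z \<phi>2) \<Psi>
     \<and> \<Psi> ` (Ind f (Cgrp f) \<phi>1) = Ind f C6Z \<phi>2
     \<and> B1 \<in> K \<and> B2 \<in> K
     \<and> (\<forall>a b. (\<lambda>y. a * B1 y + b * B2 y) = (\<lambda>y. 0) \<longrightarrow> a = 0 \<and> b = 0)
     \<and> (\<forall>F\<in>K. \<exists>a b. F = (\<lambda>y. a * B1 y + b * B2 y))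
     \<and> (\<forall>x\<in>Gset f. transl f x B1 = (\<lambda>y. \<rho> x $ 1 $ 1 * B1 y + \<rho> x $ 2 $ 1 * B2 y)
                 \<and> transl f x B2 = (\<lambda>y. \<rho> x $ 1 $ 2 * B1 y + \<rho> x $ 2 $ 2 * B2 y)))"

end

theory Submission
  imports Defs
begin

text \<open>
  The determinant of a representation of Q \<rtimes> Z is a character, so it is determined by its
  values on generators. On Q it is trivial as soon as it is trivial on g(\<zeta>,0,0): conjugation by
  that element permutes i = g(1,1,\<zeta>), j = g(1,\<zeta>^2,\<zeta>), k = g(1,\<zeta>,\<zeta>) cyclically, and k = i j.
  What remains is the value at the generator (1,1) of Z.

  For f even, \<tau>_q(1,1) is the scalar (-2)^(-f/2), and \<tau>_q(g(\<zeta>,0,0)) has order 3 and trace -1,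
  hence determinant 1. For f odd, the central elements (g(1,0,1),0) and (1,2) of C act on
  Ind \<phi>1, hence on ker \<Psi>, by the scalars -1 (because \<eta>^4 = -q^2) and -1/q. So A = \<tau>_q(1,1)
  satisfies A^2 = -1/q. Conjugation by (1,1) maps g(1,1,\<zeta>) to g(1,0,1) g(1,1,\<zeta>), so A
  anticommutes with the invertible matrix \<tau>_q(g(1,1,\<zeta>)); hence A is traceless and
  det A = 1/q by Cayley-Hamilton. Conjugation by (1,1) also squares g(\<zeta>,0,0), which forces
  its determinant to be 1.
\<close>

instantiation F4 :: comm_ring_1
begin

definition zero_F4_def: "0 = F0"
definition one_F4_def: "1 = F1"
definition plus_F4_def: "x + y = f4_add x y"
definition times_F4_def: "x * y = f4_mul x y"
definition uminus_F4_def: "- (x::F4) = x"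
definition minus_F4_def: "x - y = f4_add x y"

instance
proof
  fix a b c :: F4
  show "a * b * c = a * (b * c)" unfolding times_F4_def by (cases a; cases b; cases c) auto
  show "a * b = b * a" unfolding times_F4_def by (cases a; cases b) auto
  show "1 * a = a" unfolding times_F4_def one_F4_def by (cases a) auto
  show "a + b + c = a + (b + c)" unfolding plus_F4_def by (cases a; cases b; cases c) auto
  show "a + b = b + a" unfolding plus_F4_def by (cases a; cases b) auto
  show "0 + a = a" unfolding plus_F4_def zero_F4_def by (cases a) auto
  show "- a + a = 0" unfolding plus_F4_def zero_F4_def uminus_F4_def by (cases a) auto
  show "a - b = a + - b" unfolding plus_F4_def minus_F4_def uminus_F4_def by simp
  show "(a + b) * c = a * c + b * c"
    unfolding plus_F4_def times_F4_def by (cases a; cases b; cases c) auto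
  show "(0::F4) \<noteq> 1" unfolding zero_F4_def one_F4_def by simp
qed

end

lemma f4_add_eq_plus: "f4_add x y = x + y"
  by (simp add: plus_F4_def)

lemma f4_mul_eq_times: "f4_mul x y = x * y"
  by (simp add: times_F4_def)

lemma F0_eq_zero: "F0 = 0"
  by (simp add: zero_F4_def)

lemma F1_eq_one: "F1 = 1"
  by (simp add: one_F4_def)

lemma f4_sq_add: "f4_sq (x + y) = f4_sq x + f4_sq y"
  unfolding f4_sq_def plus_F4_def by (cases x; cases y) auto

lemma f4_sq_mult: "f4_sq (x * y) = f4_sq x * f4_sq y"
  unfolding f4_sq_def times_F4_def by (cases x; cases y) auto

lemma f4_sq_sq: "f4_sq (f4_sq x) = x"
  unfolding f4_sq_def by (cases x) auto

lemma f4_sq_zero [simp]: "f4_sq 0 = 0" and f4_sq_one [simp]: "f4_sq 1 = 1"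
  by (simp_all add: f4_sq_def zero_F4_def one_F4_def)

lemma f4_act_add: "f4_act f r (x + y) = f4_act f r x + f4_act f r y"
  by (simp add: f4_act_def f4_sq_add)

lemma f4_act_mult: "f4_act f r (x * y) = f4_act f r x * f4_act f r y"
  by (simp add: f4_act_def f4_sq_mult)

lemma f4_act_zero [simp]: "f4_act f r 0 = 0" and f4_act_one [simp]: "f4_act f r 1 = 1"
  by (simp_all add: f4_act_def)

lemma f4_act_0 [simp]: "f4_act f 0 x = x"
  by (simp add: f4_act_def)

lemma f4_act_f4_act: "f4_act f r (f4_act f r' x) = f4_act f (r + r') x"
  by (auto simp: f4_act_def f4_sq_sq algebra_simps)

lemma f4_act_f4_sq: "f4_act f r (f4_sq x) = f4_sq (f4_act f r x)"
  by (simp add: f4_act_def)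

section \<open>The group Q\<close>

lemma mmul_gm:
  "mmul (gm a b c) (gm a' b' c') = gm (a * a') (a * b' + b * f4_sq a') (a * c' + b * f4_sq b' + c * a')"
  (is "?lhs = ?rhs")
proof (intro ext)
  fix i j :: nat
  show "?lhs i j = ?rhs i j"
    by (cases "i < 3 \<and> j < 3") (auto simp: mmul_def gm_def f4_add_eq_plus f4_mul_eq_times
        F0_eq_zero f4_sq_add f4_sq_mult f4_sq_sq algebra_simps numeral_3_eq_3 less_Suc_eq)
qed

lemmas gm_compute = mmul_gm times_F4_def plus_F4_def f4_sq_def

lemma mmul_assoc: "mmul (mmul A B) C = mmul A (mmul B C)"
  unfolding mmul_def by (intro ext) (auto simp: f4_add_eq_plus f4_mul_eq_times algebra_simps)

lemma gm_eq_iff: "gm a b c = gm a' b' c' \<longleftrightarrow> a = a' \<and> b = b' \<and> c = c'"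
proof
  assume "gm a b c = gm a' b' c'"
  then have "gm a b c 0 0 = gm a' b' c' 0 0" "gm a b c 0 1 = gm a' b' c' 0 1"
    "gm a b c 0 2 = gm a' b' c' 0 2"
    by simp_all
  then show "a = a' \<and> b = b' \<and> c = c'" by (simp add: gm_def)
qed simp

lemma gm_in_Qgrp_iff:
  "gm a b c \<in> Qgrp \<longleftrightarrow> a \<noteq> F0 \<and> f4_add (f4_mul a (f4_sq c)) (f4_mul (f4_sq a) c) = f4_cube b"
  unfolding Qgrp_def by (auto simp: gm_eq_iff)

lemmas Qgrp_compute = gm_in_Qgrp_iff f4_sq_def f4_cube_def

lemma QgrpE:
  assumes "M \<in> Qgrp"
  obtains a b c where "M = gm a b c" and "gm a b c \<in> Qgrp"
proof -
  from assms obtain a b c where "M = gm a b c" unfolding Qgrp_def by blast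
  with assms that show thesis by blast
qed

lemma mmul_gm_in_Qgrp:
  "gm a b c \<in> Qgrp \<Longrightarrow> gm a' b' c' \<in> Qgrp \<Longrightarrow> mmul (gm a b c) (gm a' b' c') \<in> Qgrp"
  unfolding mmul_gm gm_in_Qgrp_iff plus_F4_def times_F4_def
  by (cases a; cases b; cases c; simp add: f4_sq_def f4_cube_def;
      cases a'; cases b'; cases c'; simp add: f4_sq_def f4_cube_def)

lemma mmul_in_Qgrp:
  assumes "M \<in> Qgrp" and "N \<in> Qgrp"
  shows "mmul M N \<in> Qgrp"
proof -
  obtain a b c a' b' c' where "M = gm a b c" "gm a b c \<in> Qgrp" "N = gm a' b' c'" "gm a' b' c' \<in> Qgrp"
    using assms by (meson QgrpE)
  then show ?thesis by (simp add: mmul_gm_in_Qgrp)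
qed

lemma one3_in_Qgrp: "one3 \<in> Qgrp"
  by (simp add: one3_def Qgrp_compute)

lemma mmul_one3_right: "M \<in> Qgrp \<Longrightarrow> mmul M one3 = M"
  by (erule QgrpE) (simp add: one3_def mmul_gm F0_eq_zero F1_eq_one)

lemma mmul_one3_left: "M \<in> Qgrp \<Longrightarrow> mmul one3 M = M"
  by (erule QgrpE) (simp add: one3_def mmul_gm F0_eq_zero F1_eq_one)

lemma gm_eq_Q8_times_C3:
  assumes "gm a b c \<in> Qgrp"
  shows "gm a b c = mmul (gm F1 (b * a) (c * a * a)) (gm a F0 F0)"
    and "gm F1 (b * a) (c * a * a) \<in> Qgrp" and "a \<in> {F1, Fz, Fz2}"
  using assms unfolding gm_in_Qgrp_iff mmul_gm times_F4_def plus_F4_def gm_eq_iff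
  by (cases a; cases b; cases c; auto simp: f4_sq_def f4_cube_def)+

lemma Q8_cases:
  "gm F1 b c \<in> Qgrp \<Longrightarrow>
     (b, c) \<in> {(F0, F0), (F0, F1), (F1, Fz), (F1, Fz2), (Fz, Fz), (Fz, Fz2), (Fz2, Fz), (Fz2, Fz2)}"
  unfolding gm_in_Qgrp_iff by (cases b; cases c) (auto simp: f4_sq_def f4_cube_def)

lemma C4_eq: "C4 = {one3, gm F1 F1 Fz, gm F1 F0 F1, gm F1 F1 Fz2}"
proof -
  have "{k::nat. k < 4} = {0, 1, 2, 3}" by auto
  then have "C4 = mpow (gm F1 F1 Fz) ` {0, 1, 2, 3}"
    unfolding C4_def by blast
  then show ?thesis
    by (simp add: numeral_3_eq_3 numeral_2_eq_2 one3_def gm_compute)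
qed

section \<open>The semidirect product Q \<rtimes> Z\<close>

lemma mact_gm: "mact f r (gm a b c) = gm (f4_act f r a) (f4_act f r b) (f4_act f r c)"
  unfolding mact_def gm_def by (intro ext) (simp add: f4_act_f4_sq F0_eq_zero)

lemma mact_trivial: "even (int f * r) \<Longrightarrow> mact f r M = M"
  unfolding mact_def by (simp add: f4_act_def)

lemma mact_mact: "mact f r (mact f r' M) = mact f (r + r') M"
  unfolding mact_def by (simp add: f4_act_f4_act)

lemma mact_mmul: "mact f r (mmul A B) = mmul (mact f r A) (mact f r B)"
  unfolding mact_def mmul_def
  by (intro ext) (simp add: f4_add_eq_plus f4_mul_eq_times f4_act_add f4_act_mult F0_eq_zero)

lemma mact_one3 [simp]: "mact f r one3 = one3"
  by (simp add: one3_def mact_gm F0_eq_zero F1_eq_one)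

lemma mact_in_Qgrp:
  assumes "M \<in> Qgrp"
  shows "mact f r M \<in> Qgrp"
proof -
  have "gm (f4_act f r a) (f4_act f r b) (f4_act f r c) \<in> Qgrp" if "gm a b c \<in> Qgrp" for a b c
    using that unfolding gm_in_Qgrp_iff f4_act_def
    by (cases a; cases b; cases c) (auto simp: f4_sq_def f4_cube_def)
  with assms show ?thesis by (metis QgrpE mact_gm)
qed

lemma Gset_iff [simp]: "(M, n) \<in> Gset f \<longleftrightarrow> M \<in> Qgrp"
  by (simp add: Gset_def)

lemma gmul_in_Gset: "x \<in> Gset f \<Longrightarrow> y \<in> Gset f \<Longrightarrow> gmul f x y \<in> Gset f"
  unfolding Gset_def gmul_def by (auto intro!: mmul_in_Qgrp mact_in_Qgrp)

lemma gmul_assoc: "gmul f (gmul f x y) z = gmul f x (gmul f y z)"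
  unfolding gmul_def by (simp add: mmul_assoc mact_mmul mact_mact add.assoc)

lemma gmul_Qgrp_0 [simp]: "gmul f (M, 0) (N, n) = (mmul M N, n)"
  by (simp add: gmul_def mact_trivial)

lemma gmul_one3: "M \<in> Qgrp \<Longrightarrow> gmul f (M, m) (one3, n) = (M, m + n)"
  by (simp add: gmul_def mmul_one3_right)

lemma Qgrp_character_trivial:
  fixes D :: "mat3 \<Rightarrow> 'k::field"
  assumes mult: "\<And>M N. M \<in> Qgrp \<Longrightarrow> N \<in> Qgrp \<Longrightarrow> D (mmul M N) = D M * D N"
    and nonzero: "D (gm F1 F1 Fz) \<noteq> 0" and C3_gen: "D (gm Fz F0 F0) = 1"
    and M: "M \<in> Qgrp"
  shows "D M = 1"
proof -
  have mem: "gm F1 F1 Fz \<in> Qgrp" "gm F1 Fz2 Fz \<in> Qgrp" "gm F1 Fz Fz \<in> Qgrp"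
    "gm Fz F0 F0 \<in> Qgrp" "gm F1 F0 F1 \<in> Qgrp" "gm F1 F0 F0 \<in> Qgrp" "gm Fz2 F0 F0 \<in> Qgrp"
    by (simp_all add: Qgrp_compute)
  have i_j: "D (gm F1 F1 Fz) = D (gm F1 Fz2 Fz)"
    using mult[OF mem(4) mem(1)] mult[OF mem(2) mem(4)] C3_gen by (simp add: gm_compute)
  have j_k: "D (gm F1 Fz2 Fz) = D (gm F1 Fz Fz)"
    using mult[OF mem(4) mem(2)] mult[OF mem(3) mem(4)] C3_gen by (simp add: gm_compute)
  have "D (gm F1 Fz Fz) = D (gm F1 F1 Fz) * D (gm F1 Fz2 Fz)"
    using mult[OF mem(1) mem(2)] by (simp add: gm_compute)
  then have i: "D (gm F1 F1 Fz) = 1"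
    using i_j j_k nonzero by simp
  have j: "D (gm F1 Fz2 Fz) = 1" and k: "D (gm F1 Fz Fz) = 1"
    using i i_j j_k by auto
  have z: "D (gm F1 F0 F1) = 1"
    using mult[OF mem(1) mem(1)] i by (simp add: gm_compute)
  have e: "D (gm F1 F0 F0) = 1"
    using mult[OF mem(5) mem(5)] z by (simp add: gm_compute)
  have "D (gm F1 F1 Fz2) = 1" "D (gm F1 Fz2 Fz2) = 1" "D (gm F1 Fz Fz2) = 1"
    using mult[OF mem(5) mem(1)] mult[OF mem(5) mem(2)] mult[OF mem(5) mem(3)] i j k z
    by (simp_all add: gm_compute)
  then have Q8: "D (gm F1 b c) = 1" if "gm F1 b c \<in> Qgrp" for b c
    using Q8_cases[OF that] i j k z e by fastforce
  have C3: "D (gm a F0 F0) = 1" if "a \<in> {F1, Fz, Fz2}" for a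
    using that mult[OF mem(4) mem(4)] e C3_gen by (auto simp: gm_compute)
  obtain a b c where "M = gm a b c" and "gm a b c \<in> Qgrp"
    using M by (rule QgrpE)
  with gm_eq_Q8_times_C3[of a b c] show ?thesis
    using mult[of "gm F1 (b * a) (c * a * a)" "gm a F0 F0"] Q8 C3 mem(4,6,7) by auto
qed

lemma mat_nth: "(mat x :: 'a::zero^'n^'n) $ i $ j = (if i = j then x else 0)"
  by (simp add: mat_def)

lemma mat_mult_nth: "(mat c ** (A::'a::semiring_1^'m^'n)) $ i $ j = c * A $ i $ j"
  by (simp add: matrix_matrix_mult_def mat_def if_distrib if_distribR sum.delta' cong: if_cong)

lemma trace_mat_mult: "trace (mat c ** (A::'a::semiring_1^'n^'n)) = c * trace A"
  by (simp add: trace_def mat_mult_nth sum_distrib_left)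

lemma trace_eq_0_if_anticommute:
  fixes A P :: "'a::field_char_0^'n^'n"
  assumes "invertible P" and anti: "P ** A = mat (-1) ** (A ** P)"
  shows "trace A = 0"
proof -
  obtain P' where P': "P ** P' = mat 1" "P' ** P = mat 1"
    using assms(1) by (auto simp: invertible_def)
  have "trace A = trace (P ** (A ** P'))"
    by (simp add: trace_mul_sym[of P] P'(2) flip: matrix_mul_assoc)
  also have "\<dots> = trace (mat (-1) ** (A ** (P ** P')))"
    by (simp add: matrix_mul_assoc anti)
  also have "\<dots> = - trace A"
    by (simp add: P'(1) trace_mat_mult)
  finally show ?thesis by simp
qed

lemma invertible_idempotent_eq_mat_1:
  fixes A :: "'a::comm_semiring_1^'n^'n"
  assumes "invertible A" and "A ** A = A"
  shows "A = mat 1"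
proof -
  obtain A' where A': "A ** A' = mat 1"
    using assms(1) invertible_def by blast
  have "A = A ** (A ** A')"
    by (simp add: A')
  also have "\<dots> = (A ** A) ** A'"
    by (simp only: matrix_mul_assoc)
  also have "\<dots> = mat 1"
    by (simp add: assms(2) A')
  finally show ?thesis .
qed

lemma mat2_eq_iff:
  "(A::'a^2^2) = B \<longleftrightarrow> A$1$1 = B$1$1 \<and> A$1$2 = B$1$2 \<and> A$2$1 = B$2$1 \<and> A$2$2 = B$2$2"
  by (auto simp: vec_eq_iff forall_2)

lemma matrix_mult_2_nth: "((A::'a::semiring_1^2^2) ** B) $ i $ j = A$i$1 * B$1$j + A$i$2 * B$2$j"
  by (simp add: matrix_matrix_mult_def sum_2)

lemma trace_2: "trace (A::'a::semiring_1^2^2) = A$1$1 + A$2$2"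
  by (simp add: trace_def sum_2)

lemma det_mat_2: "det (mat x :: 'a::comm_ring_1^2^2) = x * x"
  by (simp add: det_2 mat_def)

lemma Cayley_Hamilton_2: "(A::'a::comm_ring_1^2^2) ** A + mat (det A) = mat (trace A) ** A"
  by (simp add: mat2_eq_iff matrix_mult_2_nth mat_mult_nth mat_nth det_2 trace_2 algebra_simps)

lemma det_eq_1_if_cube_eq_1_trace_eq_neg_1:
  fixes A :: "'a::field_char_0^2^2"
  assumes cube: "A ** A ** A = mat 1" and trace: "trace A = -1"
  shows "det A = 1"
proof (rule ccontr)
  assume "det A \<noteq> 1"
  define a b c d where "a = A$1$1" "b = A$1$2" "c = A$2$1" "d = A$2$2"
  have tr: "a + d = -1"
    using trace by (simp add: trace_2 a_b_c_d_def)
  have "(A ** A ** A)$1$1 = 1" "(A ** A ** A)$2$2 = 1"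
    using cube by (simp_all add: mat_nth)
  then have "a * a * a + 2 * a * b * c + b * c * d = 1" "d * d * d + 2 * b * c * d + a * b * c = 1"
    by (simp_all add: matrix_mult_2_nth a_b_c_d_def algebra_simps)
  with tr have "(1 - (a * d - b * c)) * (a - 1) = 0" "(1 - (a * d - b * c)) * (d - 1) = 0"
    by algebra+
  moreover have "det A = a * d - b * c"
    by (simp add: det_2 a_b_c_d_def)
  ultimately have "a + d = 2"
    using \<open>det A \<noteq> 1\<close> by simp
  with tr show False by simp
qed

section \<open>Determinants of representations of Q \<rtimes> Z\<close>

lemma power_int_unique:
  fixes h :: "int \<Rightarrow> 'a::field"
  assumes h0: "h 0 = 1" and h_succ: "\<And>n. h (n + 1) = h n * a" and a: "a \<noteq> 0"
  shows "h n = a powi n"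
proof (induction n rule: int_induct[where k = 0])
  case base
  then show ?case using h0 by simp
next
  case (step1 i)
  then show ?case using h_succ a by (simp add: power_int_add_1)
next
  case (step2 i)
  have "h (i - 1) = h i / a"
    using h_succ[of "i - 1"] a by simp
  then show ?case
    using step2 a by (simp add: power_int_diff)
qed

lemma det_rep_eq_power_int:
  fixes \<rho> :: "mat3 \<times> int \<Rightarrow> 'k::field^'n^'n"
  assumes mult: "\<And>x y. x \<in> Gset f \<Longrightarrow> y \<in> Gset f \<Longrightarrow> \<rho> (gmul f x y) = \<rho> x ** \<rho> y"
    and one: "\<rho> (one3, 0) = mat 1"
    and "det (\<rho> (gm F1 F1 Fz, 0)) \<noteq> 0" and "det (\<rho> (gm Fz F0 F0, 0)) = 1"
    and shift: "det (\<rho> (one3, 1)) = inverse q" and q: "q \<noteq> 0"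
    and x: "x \<in> Gset f"
  shows "det (\<rho> x) = q powi (- snd x)"
proof -
  obtain M n where x_eq: "x = (M, n)" and M: "M \<in> Qgrp"
    using x by (cases x) simp
  have det_Q: "det (\<rho> (M, 0)) = 1"
  proof (rule Qgrp_character_trivial[where D = "\<lambda>M. det (\<rho> (M, 0))"])
    fix A B assume "A \<in> Qgrp" "B \<in> Qgrp"
    then show "det (\<rho> (mmul A B, 0)) = det (\<rho> (A, 0)) * det (\<rho> (B, 0))"
      using mult[of "(A, 0)" "(B, 0)"] by (simp add: det_mul)
  qed (use assms M in simp_all)
  have succ: "det (\<rho> (one3, k + 1)) = det (\<rho> (one3, k)) * inverse q" for k
    using mult[of "(one3, k)" "(one3, 1)"] shift by (simp add: gmul_one3 one3_in_Qgrp det_mul)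
  have det_shift: "det (\<rho> (one3, k)) = inverse q powi k" for k
    by (rule power_int_unique[where h = "\<lambda>k. det (\<rho> (one3, k))"]) (use succ one q in simp_all)
  have "det (\<rho> (M, n)) = det (\<rho> (M, 0)) * det (\<rho> (one3, n))"
    using mult[of "(M, 0)" "(one3, n)"] M by (simp add: mmul_one3_right one3_in_Qgrp det_mul)
  then show ?thesis
    using x_eq det_Q det_shift by (simp add: power_int_minus power_int_inverse)
qed

lemma det_tau_q_even:
  fixes s :: "'k::field_char_0" and \<rho> :: "mat3 \<times> int \<Rightarrow> 'k^2^2"
  assumes "even f" and s_sq: "s ^ 2 = -2" and tau: "tau_q_even f s \<phi> \<rho>" and x: "x \<in> Gset f"
  shows "det (\<rho> x) = of_nat (2 ^ f) powi (- snd x)"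
proof (rule det_rep_eq_power_int[OF _ _ _ _ _ _ x])
  have rep: "is_rep2 (gmul f) (Gset f) \<rho>"
    using tau by (simp add: tau_q_even_def)
  then show mult: "\<rho> (gmul f x y) = \<rho> x ** \<rho> y" if "x \<in> Gset f" "y \<in> Gset f" for x y
    using that by (simp add: is_rep2_def)
  have invertible: "invertible (\<rho> (M, 0))" if "M \<in> Qgrp" for M
    using rep that by (simp add: is_rep2_def)
  show one: "\<rho> (one3, 0) = mat 1"
    using mult[of "(one3, 0)" "(one3, 0)"]
    by (intro invertible_idempotent_eq_mat_1 invertible one3_in_Qgrp)
      (simp add: one3_in_Qgrp mmul_one3_right)
  show "det (\<rho> (gm F1 F1 Fz, 0)) \<noteq> 0"
    using invertible[of "gm F1 F1 Fz"] invertible_det_nz by (auto simp: Qgrp_compute)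
  have "\<rho> (gm Fz F0 F0, 0) ** \<rho> (gm Fz F0 F0, 0) ** \<rho> (gm Fz F0 F0, 0) = mat 1"
    using mult[of "(gm Fz F0 F0, 0)" "(gm Fz F0 F0, 0)"] mult[of "(gm Fz2 F0 F0, 0)" "(gm Fz F0 F0, 0)"] one
    by (simp add: Qgrp_compute gm_compute one3_def)
  moreover have "trace (\<rho> (gm Fz F0 F0, 0)) = -1"
    using tau by (simp add: tau_q_even_def)
  ultimately show "det (\<rho> (gm Fz F0 F0, 0)) = 1"
    by (rule det_eq_1_if_cube_eq_1_trace_eq_neg_1)
  have "\<rho> (one3, 1) = mat (inverse (s ^ f))"
    using tau by (simp add: tau_q_even_def one3_def)
  then have "det (\<rho> (one3, 1)) = inverse ((s ^ 2) ^ f)"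
    by (simp add: det_mat_2 power_mult_distrib power2_eq_square flip: inverse_mult_distrib)
  also have "\<dots> = inverse (of_nat (2 ^ f))"
    using \<open>even f\<close> s_sq by (simp add: power_minus_even)
  finally show "det (\<rho> (one3, 1)) = inverse (of_nat (2 ^ f))" .
qed simp

section \<open>The case f odd\<close>

lemma transl_linear:
  "transl f x (\<lambda>y. u * F y + v * H y) = (\<lambda>y. u * transl f x F y + v * transl f x H y)"
  by (rule ext) (simp add: transl_def)

lemma transl_transl: "x \<in> Gset f \<Longrightarrow> transl f x (transl f x' F) = transl f (gmul f x x') F"
  by (rule ext) (simp add: transl_def gmul_in_Gset gmul_assoc)

lemma transl_one3:
  assumes "\<And>y. y \<notin> Gset f \<Longrightarrow> F y = 0"
  shows "transl f (one3, 0) F = F"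
proof
  fix y
  show "transl f (one3, 0) F y = F y"
    using assms by (cases y) (auto simp: transl_def gmul_one3)
qed

lemma Ind_vanishes: "F \<in> Ind f H chr \<Longrightarrow> y \<notin> Gset f \<Longrightarrow> F y = 0"
  unfolding Ind_def by blast

lemma transl_Ind_central:
  assumes F: "F \<in> Ind f H chr" and h: "h \<in> H" "h \<in> Gset f"
    and central: "\<And>y. y \<in> Gset f \<Longrightarrow> gmul f y h = gmul f h y"
  shows "transl f h F = (\<lambda>y. chr h * F y)"
proof
  fix y
  show "transl f h F y = chr h * F y"
  proof (cases "y \<in> Gset f")
    case True
    then show ?thesis
      using F h central by (simp add: transl_def Ind_def)
  next
    case False
    then have "F y = 0"
      using F Ind_vanishes by blast
    with False show ?thesis
      by (simp add: transl_def)
  qed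
qed

lemma Cgrp_iff: "(M, n) \<in> Cgrp f \<longleftrightarrow> M \<in> Qgrp \<and> (\<exists>b c. M = gm F1 b c) \<and> (even n \<longleftrightarrow> M \<in> C4)"
  unfolding Cgrp_def Q8_def by auto

lemma quadratic_root_power4:
  fixes \<eta> S q :: "'a::field"
  assumes "\<eta> ^ 2 + S * \<eta> + q = 0" and "S ^ 2 = 2 * q"
  shows "\<eta> ^ 4 = - (q ^ 2)"
  using assms by algebra

locale tau_q_odd_setting =
  fixes f :: nat and s :: "'k::field_char_0" and \<phi> :: "mat3 \<Rightarrow> 'k" and \<eta> :: 'k
    and \<phi>1 \<phi>2 :: "mat3 \<times> int \<Rightarrow> 'k" and \<Psi> :: "(mat3 \<times> int \<Rightarrow> 'k) \<Rightarrow> mat3 \<times> int \<Rightarrow> 'k"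
    and B1 B2 :: "mat3 \<times> int \<Rightarrow> 'k" and \<rho> :: "mat3 \<times> int \<Rightarrow> 'k^2^2"
  assumes odd_f: "odd f" and s_sq: "s ^ 2 = -2" and tau_q: "tau_q_odd f s \<phi> \<eta> \<phi>1 \<phi>2 \<Psi> B1 B2 \<rho>"
begin

abbreviation q :: 'k where "q \<equiv> of_nat (2 ^ f)"

lemma
  shows eta_root: "\<eta> ^ 2 + s ^ (f + 1) * \<eta> + q = 0"
    and phi1_character: "is_character (gmul f) (Cgrp f) \<phi>1"
    and phi1_j: "\<phi>1 (gm F1 Fz Fz, 1) = \<eta> / q"
    and phi1_shift2: "\<phi>1 (one3, 2) = - 1 / q"
    and B_in_Ind: "B1 \<in> Ind f (Cgrp f) \<phi>1" "B2 \<in> Ind f (Cgrp f) \<phi>1"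
    and B_independent: "\<And>a b. (\<lambda>y. a * B1 y + b * B2 y) = (\<lambda>y. 0) \<Longrightarrow> a = 0 \<and> b = 0"
    and transl_B1: "\<And>x. x \<in> Gset f \<Longrightarrow> transl f x B1 = (\<lambda>y. \<rho> x $ 1 $ 1 * B1 y + \<rho> x $ 2 $ 1 * B2 y)"
    and transl_B2: "\<And>x. x \<in> Gset f \<Longrightarrow> transl f x B2 = (\<lambda>y. \<rho> x $ 1 $ 2 * B1 y + \<rho> x $ 2 $ 2 * B2 y)"
  using tau_q unfolding tau_q_odd_def Let_def one3_def by auto

lemma coeffs_unique:
  assumes "(\<lambda>y. a * B1 y + b * B2 y) = (\<lambda>y. a' * B1 y + b' * B2 y)"
  shows "a = a' \<and> b = b'"
proof -
  have "(\<lambda>y. (a - a') * B1 y + (b - b') * B2 y) = (\<lambda>y. 0)"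
  proof
    fix y
    have "a * B1 y + b * B2 y = a' * B1 y + b' * B2 y"
      using assms by metis
    then show "(a - a') * B1 y + (b - b') * B2 y = 0"
      by (simp add: algebra_simps)
  qed
  then show ?thesis
    using B_independent by fastforce
qed

lemma rho_mult:
  assumes x: "x \<in> Gset f" and y: "y \<in> Gset f"
  shows "\<rho> (gmul f x y) = \<rho> x ** \<rho> y"
proof -
  have column: "\<rho> (gmul f x y) $ 1 $ j = (\<rho> x ** \<rho> y) $ 1 $ j
      \<and> \<rho> (gmul f x y) $ 2 $ j = (\<rho> x ** \<rho> y) $ 2 $ j"
    if transl_B: "\<And>z. z \<in> Gset f \<Longrightarrow> transl f z B = (\<lambda>w. \<rho> z $ 1 $ j * B1 w + \<rho> z $ 2 $ j * B2 w)"
    for j :: 2 and B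
  proof (rule coeffs_unique)
    have "transl f (gmul f x y) B = transl f x (transl f y B)"
      using transl_transl[OF x] by metis
    also have "\<dots> = transl f x (\<lambda>w. \<rho> y $ 1 $ j * B1 w + \<rho> y $ 2 $ j * B2 w)"
      using y by (simp add: transl_B)
    also have "\<dots> = (\<lambda>w. (\<rho> x ** \<rho> y) $ 1 $ j * B1 w + (\<rho> x ** \<rho> y) $ 2 $ j * B2 w)"
      using x by (simp only: transl_linear transl_B1 transl_B2) (simp add: matrix_mult_2_nth algebra_simps)
    finally show "(\<lambda>w. \<rho> (gmul f x y) $ 1 $ j * B1 w + \<rho> (gmul f x y) $ 2 $ j * B2 w) =
        (\<lambda>w. (\<rho> x ** \<rho> y) $ 1 $ j * B1 w + (\<rho> x ** \<rho> y) $ 2 $ j * B2 w)"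
      using transl_B[OF gmul_in_Gset[OF x y]] by simp
  qed
  show ?thesis
    using column[OF transl_B1] column[OF transl_B2] by (simp add: mat2_eq_iff)
qed

lemma rho_eq_mat:
  assumes x: "x \<in> Gset f"
    and "transl f x B1 = (\<lambda>y. \<alpha> * B1 y)" and "transl f x B2 = (\<lambda>y. \<alpha> * B2 y)"
  shows "\<rho> x = mat \<alpha>"
proof -
  have "(\<lambda>y. \<rho> x $ 1 $ 1 * B1 y + \<rho> x $ 2 $ 1 * B2 y) = (\<lambda>y. \<alpha> * B1 y + 0 * B2 y)"
    and "(\<lambda>y. \<rho> x $ 1 $ 2 * B1 y + \<rho> x $ 2 $ 2 * B2 y) = (\<lambda>y. 0 * B1 y + \<alpha> * B2 y)"
    using assms transl_B1[OF x] transl_B2[OF x] by simp_all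
  from this[THEN coeffs_unique] show ?thesis
    by (simp add: mat2_eq_iff mat_nth)
qed

lemma rho_central:
  assumes "h \<in> Cgrp f" and "h \<in> Gset f" and "\<And>y. y \<in> Gset f \<Longrightarrow> gmul f y h = gmul f h y"
  shows "\<rho> h = mat (\<phi>1 h)"
  using assms B_in_Ind by (intro rho_eq_mat transl_Ind_central)

lemma rho_one: "\<rho> (one3, 0) = mat 1"
  using transl_one3[OF Ind_vanishes[OF B_in_Ind(1)]] transl_one3[OF Ind_vanishes[OF B_in_Ind(2)]]
  by (intro rho_eq_mat) (simp_all add: one3_in_Qgrp)

lemma gmul_odd: "gmul f (M, m) (gm a b c, n) =
    (mmul M (if even m then gm a b c else gm (f4_sq a) (f4_sq b) (f4_sq c)), m + n)"
  using odd_f by (simp add: gmul_def mact_gm f4_act_def)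

lemma phi1_z: "\<phi>1 (gm F1 F0 F1, 0) = -1"
proof -
  have char: "\<phi>1 (gmul f x y) = \<phi>1 x * \<phi>1 y" if "x \<in> Cgrp f" "y \<in> Cgrp f" for x y
    using phi1_character that by (simp add: is_character_def)
  have mem: "(gm F1 Fz Fz, 1) \<in> Cgrp f" "(gm F1 F1 Fz, 2) \<in> Cgrp f" "(one3, 2) \<in> Cgrp f"
    "(gm F1 F0 F1, 0) \<in> Cgrp f" "(one3, 4) \<in> Cgrp f"
    by (simp_all add: Cgrp_iff C4_eq Qgrp_compute one3_def gm_eq_iff)
  have "\<phi>1 (gm F1 F0 F1, 4) = (\<eta> / q) ^ 4"
    using char[OF mem(1) mem(1)] char[OF mem(2) mem(2)] phi1_j
    by (simp add: gmul_odd gm_compute power4_eq_xxxx mult.assoc)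
  moreover have "\<phi>1 (one3, 4) = (1 / q) ^ 2"
    using char[OF mem(3) mem(3)] phi1_shift2 by (simp add: gmul_odd one3_def gm_compute power2_eq_square)
  moreover have "\<phi>1 (gm F1 F0 F1, 4) = \<phi>1 (gm F1 F0 F1, 0) * \<phi>1 (one3, 4)"
    using char[OF mem(4) mem(5)] by (simp add: one3_def gm_compute)
  ultimately have "\<phi>1 (gm F1 F0 F1, 0) = \<eta> ^ 4 / q ^ 2"
    by (simp add: field_simps power2_eq_square power4_eq_xxxx)
  moreover have "\<eta> ^ 4 = - (q ^ 2)"
  proof (rule quadratic_root_power4[OF eta_root])
    have "(s ^ (f + 1)) ^ 2 = (s ^ 2) ^ (f + 1)"
      by (metis power_mult mult.commute)
    then show "(s ^ (f + 1)) ^ 2 = 2 * q"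
      using s_sq odd_f by (simp add: power_minus_even)
  qed
  ultimately show ?thesis
    by simp
qed

lemma rho_z: "\<rho> (gm F1 F0 F1, 0) = mat (-1)"
proof -
  have "gmul f y (gm F1 F0 F1, 0) = gmul f (gm F1 F0 F1, 0) y" if y: "y \<in> Gset f" for y
  proof -
    obtain M n where "y = (M, n)" and "M \<in> Qgrp"
      using y by (cases y) simp
    then obtain a b c where "y = (gm a b c, n)"
      by (metis QgrpE)
    then show ?thesis
      by (simp add: gmul_def mact_gm mmul_gm F0_eq_zero F1_eq_one algebra_simps)
  qed
  then have "\<rho> (gm F1 F0 F1, 0) = mat (\<phi>1 (gm F1 F0 F1, 0))"
    by (intro rho_central) (simp_all add: Cgrp_iff C4_eq Qgrp_compute gm_eq_iff)
  then show ?thesis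
    by (simp add: phi1_z)
qed

lemma rho_shift2: "\<rho> (one3, 2) = mat (- 1 / q)"
proof -
  have "gmul f y (one3, 2) = gmul f (one3, 2) y" if "y \<in> Gset f" for y
    using that by (cases y) (simp add: gmul_def mact_trivial mmul_one3_left mmul_one3_right)
  then have "\<rho> (one3, 2) = mat (\<phi>1 (one3, 2))"
    by (intro rho_central) (simp_all add: Cgrp_iff C4_eq Qgrp_compute one3_def gm_eq_iff)
  then show ?thesis
    by (simp add: phi1_shift2)
qed

lemma rho_shift_square: "\<rho> (one3, 1) ** \<rho> (one3, 1) = mat (- 1 / q)"
  using rho_mult[of "(one3, 1)" "(one3, 1)"] rho_shift2 by (simp add: gmul_one3 one3_in_Qgrp)

lemma det_rho_i_nonzero: "det (\<rho> (gm F1 F1 Fz, 0)) \<noteq> 0"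
proof -
  have "\<rho> (gm F1 F1 Fz, 0) ** \<rho> (gm F1 F1 Fz, 0) = mat (-1)"
    using rho_mult[of "(gm F1 F1 Fz, 0)" "(gm F1 F1 Fz, 0)"] rho_z by (simp add: Qgrp_compute gm_compute)
  then have "det (\<rho> (gm F1 F1 Fz, 0)) * det (\<rho> (gm F1 F1 Fz, 0)) = 1"
    using det_mul[of "\<rho> (gm F1 F1 Fz, 0)" "\<rho> (gm F1 F1 Fz, 0)"] by (simp add: det_mat_2)
  then show ?thesis
    by auto
qed

lemma rho_anticommute:
  "\<rho> (gm F1 F1 Fz, 0) ** \<rho> (one3, 1) = mat (-1) ** (\<rho> (one3, 1) ** \<rho> (gm F1 F1 Fz, 0))"
proof -
  have "\<rho> (one3, 1) ** \<rho> (gm F1 F1 Fz, 0) = \<rho> (gm F1 F1 Fz2, 0) ** \<rho> (one3, 1)"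
    using rho_mult[of "(one3, 1)" "(gm F1 F1 Fz, 0)"] rho_mult[of "(gm F1 F1 Fz2, 0)" "(one3, 1)"]
    by (simp add: gmul_odd Qgrp_compute one3_in_Qgrp gm_compute one3_def)
  moreover have "\<rho> (gm F1 F1 Fz, 0) = mat (-1) ** \<rho> (gm F1 F1 Fz2, 0)"
    using rho_mult[of "(gm F1 F0 F1, 0)" "(gm F1 F1 Fz2, 0)"] rho_z by (simp add: Qgrp_compute gm_compute)
  ultimately show ?thesis
    by (simp add: matrix_mul_assoc)
qed

lemma det_rho_shift: "det (\<rho> (one3, 1)) = inverse q"
proof -
  have "invertible (\<rho> (gm F1 F1 Fz, 0))"
    by (simp add: invertible_det_nz det_rho_i_nonzero)
  then have "trace (\<rho> (one3, 1)) = 0"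
    using rho_anticommute by (rule trace_eq_0_if_anticommute)
  then have "mat (- 1 / q) + mat (det (\<rho> (one3, 1))) = (0 :: 'k^2^2)"
    using Cayley_Hamilton_2[of "\<rho> (one3, 1)"] rho_shift_square by simp
  then have "(mat (- 1 / q) + mat (det (\<rho> (one3, 1))) :: 'k^2^2) $ 1 $ 1 = 0"
    by simp
  then show ?thesis
    by (simp add: mat_nth field_simps)
qed

lemma det_rho_c: "det (\<rho> (gm Fz F0 F0, 0)) = 1"
proof -
  let ?C = "\<rho> (gm Fz F0 F0, 0)" and ?C2 = "\<rho> (gm Fz2 F0 F0, 0)" and ?A = "\<rho> (one3, 1)"
  have square: "?C2 = ?C ** ?C"
    using rho_mult[of "(gm Fz F0 F0, 0)" "(gm Fz F0 F0, 0)"] by (simp add: Qgrp_compute gm_compute)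
  have "?C2 ** ?C = mat 1"
    using rho_mult[of "(gm Fz2 F0 F0, 0)" "(gm Fz F0 F0, 0)"] rho_one
    by (simp add: Qgrp_compute gm_compute one3_def)
  then have "det ?C * det ?C * det ?C = 1"
    using square by (metis det_mul det_I)
  moreover have "?A ** ?C = ?C2 ** ?A"
    using rho_mult[of "(one3, 1)" "(gm Fz F0 F0, 0)"] rho_mult[of "(gm Fz2 F0 F0, 0)" "(one3, 1)"]
    by (simp add: gmul_odd Qgrp_compute one3_in_Qgrp gm_compute one3_def)
  then have "det ?A * det ?C = det ?A * (det ?C * det ?C)"
    using square by (metis det_mul mult.commute)
  then have "det ?C = det ?C * det ?C"
    using det_rho_shift by simp
  ultimately show ?thesis
    by (metis mult_1)
qed

theorem det_rho: "x \<in> Gset f \<Longrightarrow> det (\<rho> x) = q powi (- snd x)"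
  by (rule det_rep_eq_power_int) (simp_all add: rho_mult rho_one det_rho_i_nonzero det_rho_c det_rho_shift)

end

theorem lemma3p4:
  fixes f :: nat and s :: "'k::{alg_closed_field, field_char_0}" and \<phi> :: "mat3 \<Rightarrow> 'k"
  assumes "f \<ge> 1"
    and "s ^ 2 = -2"
    and "faithful_char_C4 \<phi>"
  shows "(even f \<longrightarrow> (\<forall>\<rho>. tau_q_even f s \<phi> \<rho> \<longrightarrow>
            (\<forall>x\<in>Gset f. det (\<rho> x) = of_nat (2 ^ f) powi (- snd x))))
       \<and> (odd f \<longrightarrow> (\<forall>\<eta> \<phi>1 \<phi>2 \<Psi> B1 B2 \<rho>. tau_q_odd f s \<phi> \<eta> \<phi>1 \<phi>2 \<Psi> B1 B2 \<rho> \<longrightarrow>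
            (\<forall>x\<in>Gset f. det (\<rho> x) = of_nat (2 ^ f) powi (- snd x))))"
proof (intro conjI impI allI ballI)
  fix \<rho> x
  assume "even f" and "tau_q_even f s \<phi> \<rho>" and "x \<in> Gset f"
  then show "det (\<rho> x) = of_nat (2 ^ f) powi (- snd x)"
    using det_tau_q_even assms(2) by blast
next
  fix \<eta> \<phi>1 \<phi>2 \<Psi> B1 B2 \<rho> x
  assume "odd f" and "tau_q_odd f s \<phi> \<eta> \<phi>1 \<phi>2 \<Psi> B1 B2 \<rho>" and "x \<in> Gset f"
  then show "det (\<rho> x) = of_nat (2 ^ f) powi (- snd x)"
    using tau_q_odd_setting.det_rho[OF tau_q_odd_setting.intro] assms(2) by blast
qed

end
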